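(* Let $\mathcal I$ be an independent family. The following are equivalent: (1) $\mathcal I$ is densely maximal; (2) $\mathcal I$ has a unique diagonalization filter, and it equals the density filter $\mathrm{fil}(\mathcal I)$.
   Context: A family $\mathcal I \subseteq [\omega]^\omega$ is independent if for all finite disjoint $\mathcal A, \mathcal B \subseteq \mathcal I$ the set $\bigcap \mathcal A \setminus \bigcup \mathcal B$ is infinite. $\mathsf{FF}(\mathcal I)$ is the set of finite partial functions $h:\mathcal I \to 2$; $\mathcal I^h := \bigcap_{A \in \mathrm{dom}(h)} A^{h(A)}$ with $A^0 = A$, $A^1 = \omega\setminus A$. $\mathcal I$ is densely maximal if for every $X \in [\omega]^\omega$ and every $h \in \mathsf{FF}(\mathcal I)$ there is $h' \supseteq h$ in $\mathsf{FF}(\mathcal I)$ with $\mathcal I^{h'} \setminus X$ or $\mathcal I^{h'} \cap X$ finite. The density filter $\mathrm{fil}(\mathcal I)$ is the set of $X \in [\omega]^\omega$ such that for every $h \in \mathsf{FF}(\mathcal I)$ there is $h' \supseteq h$ in $\mathsf{FF}(\mathcal I)$ with $\mathcal I^{h'} \setminus X$ finite. A diagonalization filter for $\mathcal I$ is a filter $\mathcal F$ on $\omega$ which is maximal (under inclusion) with respect to the property that every $X\in\mathcal F$ has infinite intersection with every $\mathcal I^h$, $h \in \mathsf{FF}(\mathcal I)$. *)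

theory Defs
  imports Main
begin

definition independent :: "nat set set \<Rightarrow> bool" where
  "independent \<I> \<longleftrightarrow> (\<forall>A\<in>\<I>. infinite A) \<and>
     (\<forall>\<A> \<B>. finite \<A> \<and> finite \<B> \<and> \<A> \<subseteq> \<I> \<and> \<B> \<subseteq> \<I> \<and> \<A> \<inter> \<B> = {}
        \<longrightarrow> infinite (\<Inter>\<A> - \<Union>\<B>))"

definition FF :: "nat set set \<Rightarrow> (nat set \<rightharpoonup> nat) set" where
  "FF \<I> = {h. finite (dom h) \<and> dom h \<subseteq> \<I> \<and> ran h \<subseteq> {0, 1}}"

definition power_set :: "nat set \<Rightarrow> nat \<Rightarrow> nat set" where
  "power_set A i = (if i = 0 then A else UNIV - A)"

definition Ih :: "(nat set \<rightharpoonup> nat) \<Rightarrow> nat set" where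
  "Ih h = (\<Inter>A\<in>dom h. power_set A (the (h A)))"

definition densely_maximal :: "nat set set \<Rightarrow> bool" where
  "densely_maximal \<I> \<longleftrightarrow> (\<forall>X. infinite X \<longrightarrow> (\<forall>h\<in>FF \<I>. \<exists>h'\<in>FF \<I>. h \<subseteq>\<^sub>m h' \<and>
      (finite (Ih h' - X) \<or> finite (Ih h' \<inter> X))))"

definition density_filter :: "nat set set \<Rightarrow> nat set set" where
  "density_filter \<I> = {X. infinite X \<and> (\<forall>h\<in>FF \<I>. \<exists>h'\<in>FF \<I>. h \<subseteq>\<^sub>m h' \<and> finite (Ih h' - X))}"

definition set_filter :: "nat set set \<Rightarrow> bool" where
  "set_filter F \<longleftrightarrow> UNIV \<in> F \<and> {} \<notin> F \<and>
     (\<forall>X Y. X \<in> F \<and> Y \<in> F \<longrightarrow> X \<inter> Y \<in> F) \<and>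
     (\<forall>X Y. X \<in> F \<and> X \<subseteq> Y \<longrightarrow> Y \<in> F)"

definition meets_all_Ih :: "nat set set \<Rightarrow> nat set set \<Rightarrow> bool" where
  "meets_all_Ih \<I> F \<longleftrightarrow> (\<forall>X\<in>F. \<forall>h\<in>FF \<I>. infinite (X \<inter> Ih h))"

definition diagonalization_filter :: "nat set set \<Rightarrow> nat set set \<Rightarrow> bool" where
  "diagonalization_filter \<I> F \<longleftrightarrow> set_filter F \<and> meets_all_Ih \<I> F \<and>
     (\<forall>G. set_filter G \<and> meets_all_Ih \<I> G \<and> F \<subseteq> G \<longrightarrow> G = F)"

end

theory Submission
  imports Defs
begin

text \<open>
  Every diagonalization filter \<open>F\<close> contains \<open>fil(\<I>)\<close>: a set \<open>X \<in> fil(\<I>)\<close> meets every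
  \<open>Z \<inter> \<I>\<^sup>h\<close> (\<open>Z \<in> F\<close>) in an infinite set, so \<open>F\<close> can be extended by \<open>X\<close> and maximality puts
  \<open>X\<close> into \<open>F\<close>. If \<open>\<I>\<close> is densely maximal, every set meeting all \<open>\<I>\<^sup>h\<close> infinitely already
  lies in \<open>fil(\<I>)\<close>; hence \<open>fil(\<I>)\<close> is a maximal filter of this kind and contains every
  other one, so it is the unique diagonalization filter. Conversely, if \<open>X\<close> and \<open>h\<close> witness
  the failure of dense maximality, then \<open>Y = X \<union> (\<omega> - \<I>\<^sup>h)\<close> can be added to \<open>fil(\<I>)\<close>
  although \<open>Y \<notin> fil(\<I>)\<close>, so \<open>fil(\<I>)\<close> is not a diagonalization filter.
\<close>

lemma Ih_antimono: "h \<subseteq>\<^sub>m h' \<Longrightarrow> Ih h' \<subseteq> Ih h"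
  unfolding Ih_def map_le_def by (force simp: domIff)

lemma Ih_empty [simp]: "Ih Map.empty = UNIV"
  unfolding Ih_def by simp

lemma empty_in_FF [simp]: "Map.empty \<in> FF I"
  unfolding FF_def by simp

lemma Ih_eq_Inter_diff_Union:
  assumes "h \<in> FF I"
  shows "Ih h = \<Inter>{A\<in>dom h. h A = Some 0} - \<Union>{A\<in>dom h. h A = Some 1}"
proof -
  have two_valued: "h A = Some 0 \<or> h A = Some 1" if "A \<in> dom h" for A
    using assms that by (auto simp: FF_def ran_def)
  show ?thesis
  proof (intro set_eqI iffI)
    fix x assume "x \<in> Ih h"
    then have "x \<in> power_set A (the (h A))" if "A \<in> dom h" for A
      using that unfolding Ih_def by blast
    then show "x \<in> \<Inter>{A\<in>dom h. h A = Some 0} - \<Union>{A\<in>dom h. h A = Some 1}"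
      by (fastforce simp: power_set_def)
  next
    fix x assume "x \<in> \<Inter>{A\<in>dom h. h A = Some 0} - \<Union>{A\<in>dom h. h A = Some 1}"
    then show "x \<in> Ih h"
      unfolding Ih_def power_set_def using two_valued by fastforce
  qed
qed

lemma infinite_Ih:
  assumes "independent I" and "h \<in> FF I"
  shows "infinite (Ih h)"
proof -
  have "finite (dom h)" and "dom h \<subseteq> I"
    using \<open>h \<in> FF I\<close> unfolding FF_def by auto
  then have "infinite (\<Inter>{A\<in>dom h. h A = Some 0} - \<Union>{A\<in>dom h. h A = Some 1})"
    using \<open>independent I\<close> unfolding independent_def
    by (elim conjE allE[of _ "{A\<in>dom h. h A = Some 0}"] allE[of _ "{A\<in>dom h. h A = Some 1}"])
      auto
  then show ?thesis
    using Ih_eq_Inter_diff_Union[OF \<open>h \<in> FF I\<close>] by simp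
qed

lemma map_le_map_add_if_Ih_meet:
  assumes "g \<in> FF I" "h \<in> FF I" and "x \<in> Ih g" "x \<in> Ih h"
  shows "g \<subseteq>\<^sub>m g ++ h"
  unfolding map_le_def
proof
  fix A assume "A \<in> dom g"
  show "g A = (g ++ h) A"
  proof (cases "h A")
    case (Some v)
    obtain u where u: "g A = Some u" using \<open>A \<in> dom g\<close> by auto
    have "u \<in> {0, 1}" "v \<in> {0, 1}"
      using assms(1,2) u Some unfolding FF_def ran_def by auto
    moreover have "x \<in> power_set A u" "x \<in> power_set A v"
      using assms(3,4) \<open>A \<in> dom g\<close> u Some unfolding Ih_def by force+
    ultimately show ?thesis
      using u Some unfolding power_set_def by auto
  qed (simp add: map_add_def)
qed

lemma map_add_in_FF: "g \<in> FF I \<Longrightarrow> h \<in> FF I \<Longrightarrow> g ++ h \<in> FF I"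
proof -
  have "ran (g ++ h) \<subseteq> ran g \<union> ran h"
    unfolding ran_def map_add_def by (auto split: option.splits)
  then show "g \<in> FF I \<Longrightarrow> h \<in> FF I \<Longrightarrow> g ++ h \<in> FF I"
    unfolding FF_def by auto
qed

lemma density_filterD:
  "X \<in> density_filter I \<Longrightarrow> h \<in> FF I \<Longrightarrow> \<exists>h'\<in>FF I. h \<subseteq>\<^sub>m h' \<and> finite (Ih h' - X)"
  unfolding density_filter_def by blast

lemma set_filter_density_filter:
  assumes "independent I"
  shows "set_filter (density_filter I)"
proof -
  have dense_Int: "\<exists>h'\<in>FF I. h \<subseteq>\<^sub>m h' \<and> finite (Ih h' - (X \<inter> Y))"
    if X: "X \<in> density_filter I" and Y: "Y \<in> density_filter I" and h: "h \<in> FF I"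
    for X Y h
  proof -
    obtain h1 where h1: "h1 \<in> FF I" "h \<subseteq>\<^sub>m h1" "finite (Ih h1 - X)"
      using X h by (blast dest: density_filterD)
    obtain h2 where h2: "h2 \<in> FF I" "h1 \<subseteq>\<^sub>m h2" "finite (Ih h2 - Y)"
      using Y h1(1) by (blast dest: density_filterD)
    have "Ih h2 - (X \<inter> Y) \<subseteq> (Ih h1 - X) \<union> (Ih h2 - Y)"
      using Ih_antimono[OF h2(2)] by auto
    then have "finite (Ih h2 - (X \<inter> Y))"
      using h1(3) h2(3) by (simp add: finite_subset)
    then show ?thesis
      using h2(1) map_le_trans[OF h1(2) h2(2)] by blast
  qed
  have "X \<inter> Y \<in> density_filter I" if XY: "X \<in> density_filter I" "Y \<in> density_filter I" for X Y
  proof -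
    obtain h' where "h' \<in> FF I" "finite (Ih h' - (X \<inter> Y))"
      using dense_Int[OF XY empty_in_FF] by blast
    then have "infinite (X \<inter> Y)"
      using infinite_Ih[OF assms] by (metis Diff_infinite_finite)
    then show ?thesis
      using dense_Int[OF XY] unfolding density_filter_def by blast
  qed
  moreover have "Y \<in> density_filter I" if X: "X \<in> density_filter I" and "X \<subseteq> Y" for X Y
  proof -
    have "infinite Y"
      using X \<open>X \<subseteq> Y\<close> finite_subset unfolding density_filter_def by blast
    moreover have "\<exists>h'\<in>FF I. h \<subseteq>\<^sub>m h' \<and> finite (Ih h' - Y)" if "h \<in> FF I" for h
    proof -
      obtain h' where "h' \<in> FF I" "h \<subseteq>\<^sub>m h'" "finite (Ih h' - X)"
        using X \<open>h \<in> FF I\<close> by (blast dest: density_filterD)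
      moreover have "Ih h' - Y \<subseteq> Ih h' - X"
        using \<open>X \<subseteq> Y\<close> by blast
      ultimately show ?thesis
        using finite_subset by blast
    qed
    ultimately show ?thesis
      unfolding density_filter_def by blast
  qed
  moreover have "UNIV \<in> density_filter I"
    unfolding density_filter_def using map_le_refl by fastforce
  moreover have "{} \<notin> density_filter I"
    unfolding density_filter_def by blast
  ultimately show ?thesis
    unfolding set_filter_def by blast
qed

lemma meets_all_Ih_density_filter:
  assumes "independent I"
  shows "meets_all_Ih I (density_filter I)"
  unfolding meets_all_Ih_def
proof (intro ballI)
  fix X h assume "X \<in> density_filter I" "h \<in> FF I"
  then obtain h' where h': "h' \<in> FF I" "h \<subseteq>\<^sub>m h'" "finite (Ih h' - X)"
    by (blast dest: density_filterD)
  have "Ih h' \<subseteq> (Ih h' - X) \<union> (X \<inter> Ih h)"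
    using Ih_antimono[OF h'(2)] by auto
  then show "infinite (X \<inter> Ih h)"
    using infinite_Ih[OF assms h'(1)] h'(3) by (meson finite_UnI finite_subset)
qed

definition filter_extension :: "nat set set \<Rightarrow> nat set \<Rightarrow> nat set set" where
  "filter_extension F Y = {W. \<exists>Z\<in>F. Z \<inter> Y \<subseteq> W}"

lemma filter_extension_meets_all_Ih:
  assumes F: "set_filter F"
    and Y: "\<And>Z g. Z \<in> F \<Longrightarrow> g \<in> FF I \<Longrightarrow> infinite (Z \<inter> Y \<inter> Ih g)"
  shows "set_filter (filter_extension F Y)" "meets_all_Ih I (filter_extension F Y)"
    and "F \<subseteq> filter_extension F Y" "Y \<in> filter_extension F Y"
proof -
  have "UNIV \<in> F" and Int_F: "\<And>X Z. X \<in> F \<Longrightarrow> Z \<in> F \<Longrightarrow> X \<inter> Z \<in> F"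
    using F unfolding set_filter_def by blast+
  have "{} \<notin> filter_extension F Y"
  proof
    assume "{} \<in> filter_extension F Y"
    then obtain Z where "Z \<in> F" "Z \<inter> Y = {}"
      unfolding filter_extension_def by blast
    with Y[of Z Map.empty] show False by simp
  qed
  moreover have "X \<inter> W \<in> filter_extension F Y"
    if XW: "X \<in> filter_extension F Y" "W \<in> filter_extension F Y" for X W
  proof -
    obtain Z1 Z2 where "Z1 \<in> F" "Z1 \<inter> Y \<subseteq> X" "Z2 \<in> F" "Z2 \<inter> Y \<subseteq> W"
      using XW unfolding filter_extension_def by blast
    then show ?thesis
      unfolding filter_extension_def using Int_F by (intro CollectI bexI[of _ "Z1 \<inter> Z2"]) auto
  qed
  moreover have "UNIV \<in> filter_extension F Y"
    and "\<And>X W. X \<in> filter_extension F Y \<Longrightarrow> X \<subseteq> W \<Longrightarrow> W \<in> filter_extension F Y"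
    unfolding filter_extension_def using \<open>UNIV \<in> F\<close> by blast+
  ultimately show "set_filter (filter_extension F Y)"
    unfolding set_filter_def by blast
  show "meets_all_Ih I (filter_extension F Y)"
    unfolding meets_all_Ih_def
  proof (intro ballI)
    fix W g assume "W \<in> filter_extension F Y" "g \<in> FF I"
    then obtain Z where "Z \<in> F" "Z \<inter> Y \<subseteq> W"
      unfolding filter_extension_def by blast
    then have "Z \<inter> Y \<inter> Ih g \<subseteq> W \<inter> Ih g" by blast
    then show "infinite (W \<inter> Ih g)"
      using Y[OF \<open>Z \<in> F\<close> \<open>g \<in> FF I\<close>] finite_subset by blast
  qed
  show "F \<subseteq> filter_extension F Y" "Y \<in> filter_extension F Y"
    unfolding filter_extension_def using \<open>UNIV \<in> F\<close> by blast+
qed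

lemma diagonalization_filter_absorbs:
  assumes D: "diagonalization_filter I F"
    and Y: "\<And>Z g. Z \<in> F \<Longrightarrow> g \<in> FF I \<Longrightarrow> infinite (Z \<inter> Y \<inter> Ih g)"
  shows "Y \<in> F"
proof -
  have "set_filter F"
    using D unfolding diagonalization_filter_def by blast
  note ext = filter_extension_meets_all_Ih[OF this Y]
  then have "filter_extension F Y = F"
    using D unfolding diagonalization_filter_def by blast
  with ext(4) show ?thesis by simp
qed

lemma density_filter_subset_diagonalization_filter:
  assumes D: "diagonalization_filter I F"
  shows "density_filter I \<subseteq> F"
proof
  fix X assume X: "X \<in> density_filter I"
  show "X \<in> F"
  proof (rule diagonalization_filter_absorbs[OF D])
    fix Z g assume "Z \<in> F" "g \<in> FF I"
    obtain h' where h': "h' \<in> FF I" "g \<subseteq>\<^sub>m h'" "finite (Ih h' - X)"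
      using X \<open>g \<in> FF I\<close> by (blast dest: density_filterD)
    have "infinite (Z \<inter> Ih h')"
      using D \<open>Z \<in> F\<close> h'(1) unfolding diagonalization_filter_def meets_all_Ih_def by blast
    moreover have "Z \<inter> Ih h' \<subseteq> (Z \<inter> X \<inter> Ih g) \<union> (Ih h' - X)"
      using Ih_antimono[OF h'(2)] by auto
    ultimately show "infinite (Z \<inter> X \<inter> Ih g)"
      using h'(3) by (meson finite_UnI finite_subset)
  qed
qed

lemma densely_maximal_meets_all_Ih_subset_density_filter:
  assumes dm: "densely_maximal I" and G: "meets_all_Ih I G"
  shows "G \<subseteq> density_filter I"
proof
  fix X assume "X \<in> G"
  then have meets: "infinite (X \<inter> Ih h)" if "h \<in> FF I" for h
    using G that unfolding meets_all_Ih_def by blast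
  then have "infinite X"
    using meets[OF empty_in_FF] by simp
  moreover have "\<exists>h'\<in>FF I. h \<subseteq>\<^sub>m h' \<and> finite (Ih h' - X)" if "h \<in> FF I" for h
  proof -
    obtain h' where "h' \<in> FF I" "h \<subseteq>\<^sub>m h'" "finite (Ih h' - X) \<or> finite (Ih h' \<inter> X)"
      using dm \<open>infinite X\<close> \<open>h \<in> FF I\<close> unfolding densely_maximal_def by blast
    then show ?thesis
      using meets[of h'] by (auto simp: Int_commute)
  qed
  ultimately show "X \<in> density_filter I"
    unfolding density_filter_def by blast
qed

lemma diagonalization_filter_density_filter_if_densely_maximal:
  assumes "independent I" "densely_maximal I"
  shows "diagonalization_filter I (density_filter I)"
  unfolding diagonalization_filter_def
  using set_filter_density_filter[OF assms(1)] meets_all_Ih_density_filter[OF assms(1)]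
    densely_maximal_meets_all_Ih_subset_density_filter[OF assms(2)]
  by blast

lemma densely_maximal_if_diagonalization_filter_density_filter:
  assumes D: "diagonalization_filter I (density_filter I)"
  shows "densely_maximal I"
  unfolding densely_maximal_def
proof (intro allI impI ballI, rule ccontr)
  fix X h assume h: "h \<in> FF I"
  assume "\<not> (\<exists>h'\<in>FF I. h \<subseteq>\<^sub>m h' \<and> (finite (Ih h' - X) \<or> finite (Ih h' \<inter> X)))"
  then have bad: "infinite (Ih h' - X) \<and> infinite (Ih h' \<inter> X)" if "h' \<in> FF I" "h \<subseteq>\<^sub>m h'" for h'
    using that by blast
  define Y where "Y = X \<union> (UNIV - Ih h)"
  have "Y \<in> density_filter I"
  proof (rule diagonalization_filter_absorbs[OF D])
    fix Z g assume Z: "Z \<in> density_filter I" and g: "g \<in> FF I"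
    show "infinite (Z \<inter> Y \<inter> Ih g)"
    proof (cases "Ih g \<inter> Ih h = {}")
      case True
      then have "Z \<inter> Ih g \<subseteq> Z \<inter> Y \<inter> Ih g"
        unfolding Y_def by auto
      moreover have "infinite (Z \<inter> Ih g)"
        using D Z g unfolding diagonalization_filter_def meets_all_Ih_def by blast
      ultimately show ?thesis
        using finite_subset by blast
    next
      case False
      then obtain x where "x \<in> Ih g" "x \<in> Ih h" by blast
      then have gk: "g \<subseteq>\<^sub>m g ++ h"
        using map_le_map_add_if_Ih_meet g h by blast
      obtain k where k: "k \<in> FF I" "g ++ h \<subseteq>\<^sub>m k" "finite (Ih k - Z)"
        using Z map_add_in_FF[OF g h] by (blast dest: density_filterD)
      have "h \<subseteq>\<^sub>m k"
        using map_le_map_add k(2) map_le_trans by blast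
      then have "infinite (Ih k \<inter> X)"
        using bad k(1) by blast
      moreover have "Ih k \<inter> X \<subseteq> (Z \<inter> Y \<inter> Ih g) \<union> (Ih k - Z)"
        using Ih_antimono[OF map_le_trans[OF gk k(2)]] unfolding Y_def by auto
      ultimately show ?thesis
        using k(3) by (meson finite_UnI finite_subset)
    qed
  qed
  then obtain h' where h': "h' \<in> FF I" "h \<subseteq>\<^sub>m h'" "finite (Ih h' - Y)"
    using h by (blast dest: density_filterD)
  have "Ih h' - Y = Ih h' - X"
    using Ih_antimono[OF h'(2)] unfolding Y_def by auto
  then show False
    using bad[OF h'(1,2)] h'(3) by simp
qed

theorem lemma2p3:
  assumes "independent \<I>"
  shows "densely_maximal \<I> \<longleftrightarrow>
           ((\<exists>!F. diagonalization_filter \<I> F) \<and> diagonalization_filter \<I> (density_filter \<I>))"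
proof
  assume dm: "densely_maximal \<I>"
  have D: "diagonalization_filter \<I> (density_filter \<I>)"
    using diagonalization_filter_density_filter_if_densely_maximal[OF assms dm] .
  have "F = density_filter \<I>" if "diagonalization_filter \<I> F" for F
    using density_filter_subset_diagonalization_filter[OF that]
      densely_maximal_meets_all_Ih_subset_density_filter[OF dm] that
    unfolding diagonalization_filter_def by blast
  with D show "(\<exists>!F. diagonalization_filter \<I> F) \<and> diagonalization_filter \<I> (density_filter \<I>)"
    by blast
next
  assume "(\<exists>!F. diagonalization_filter \<I> F) \<and> diagonalization_filter \<I> (density_filter \<I>)"
  then show "densely_maximal \<I>"
    using densely_maximal_if_diagonalization_filter_density_filter by blast
qed

end
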